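(* Let $Q_k^A,Q_k^B$ be the SDQ iterates and $w_k^A,w_k^B$ the associated noise vectors (see context). Define the upper comparison system \[ Q_{k+1}^{A_U}-Q^*=(I+\alpha\gamma DP\Pi_{Q_k^B}-\alpha D)(Q_k^{A_U}-Q^* )+\alpha w_k^A,\qquad Q_{k+1}^{B_U}-Q^*=(I+\alpha\gamma DP\Pi_{Q_k^A}-\alpha D)(Q_k^{B_U}-Q^* )+\alpha w_k^B, \] with arbitrary initial vectors $Q_0^{A_U},Q_0^{B_U}\in\mathbb{R}^{|\mathcal{S}||\mathcal{A}|}$. Suppose $Q_0^{A_U}-Q^*\ge Q_0^A-Q^*$ and $Q_0^{B_U}-Q^*\ge Q_0^B-Q^*$ element-wise. Then for all $k\ge 0$, $Q_k^{A_U}-Q^*\ge Q_k^A-Q^*$ and $Q_k^{B_U}-Q^*\ge Q_k^B-Q^*$ element-wise.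
   Context: Finite MDP with states $\mathcal{S}=\{1,\dots,|\mathcal{S}|\}$, actions $\mathcal{A}=\{1,\dots,|\mathcal{A}|\}$, transitions $P(s'|s,a)$, bounded deterministic reward $r(s,a,s')$, discount $\gamma\in(0,1)$, optimal action-value function $Q^*$. Sampling distribution $d(s,a)>0$ on $\mathcal{S}\times\mathcal{A}$; at iteration $k$, $(s_k,a_k)\sim d$ i.i.d., $s_k'\sim P(\cdot|s_k,a_k)$, $r_{k+1}=r(s_k,a_k,s_k')$. Constant step-size $\alpha\in(0,1)$. SDQ: only entry $(s_k,a_k)$ is updated, $Q_{k+1}^A(s_k,a_k)=Q_k^A(s_k,a_k)+\alpha\{r_{k+1}+\gamma Q_k^A(s_k',\arg\max_aQ_k^B(s_k',a))-Q_k^A(s_k,a_k)\}$ and symmetrically for $B$ with roles of $A,B$ swapped. Vector notation: $Q\in\mathbb{R}^{|\mathcal{S}||\mathcal{A}|}$ stacks $Q(\cdot,1),\dots,Q(\cdot,|\mathcal{A}|)$, so $Q(s,a)=(e_a\otimes e_s)^TQ$. $D$ is the diagonal matrix with entry $d(s,a)$ at position $(s,a)$. $P\in\mathbb{R}^{|\mathcal{S}||\mathcal{A}|\times|\mathcal{S}|}$ has row $(s,a)$ equal to $P(\cdot|s,a)$. $R\in\mathbb{R}^{|\mathcal{S}||\mathcal{A}|}$, $R(s,a)=\mathbb{E}[r(s,a,s')|s,a]$. For $Q$, $\pi_Q(s)=\arg\max_aQ(s,a)$ (fixed tie-breaking) and $\Pi_Q\in\mathbb{R}^{|\mathcal{S}|\times|\mathcal{S}||\mathcal{A}|}$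 has $s$-th row $e_{\pi_Q(s)}^T\otimes e_s^T$, so $(\Pi_QQ')(s)=Q'(s,\pi_Q(s))$. Noise: $w_k^A=(e_{a_k}\otimes e_{s_k})r_{k+1}+\gamma(e_{a_k}\otimes e_{s_k})e_{s_k'}^T\Pi_{Q_k^B}Q_k^A-(e_{a_k}\otimes e_{s_k})(e_{a_k}\otimes e_{s_k})^TQ_k^A-(DR+\gamma DP\Pi_{Q_k^B}Q_k^A-DQ_k^A)$, and $w_k^B$ is the same with $A$ and $B$ swapped. Element-wise inequalities between vectors are denoted $\ge$. *)

theory Defs
  imports "HOL-Analysis.Analysis"
begin

text \<open>P s a s' = P(s'|s,a); rw s a s' = r(s,a,s'); d = sampling distribution;
  sel = greedy selector with a fixed tie-breaking rule.\<close>

definition expR :: "('s::finite \<Rightarrow> 'a::finite \<Rightarrow> 's \<Rightarrow> real) \<Rightarrow> ('s \<Rightarrow> 'a \<Rightarrow> 's \<Rightarrow> real) \<Rightarrow> real^('s \<times> 'a)" where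
  "expR P rw = (\<chi> i. case i of (s,a) \<Rightarrow> \<Sum>s'\<in>UNIV. P s a s' * rw s a s')"

definition Dmat :: "('s::finite \<times> 'a::finite \<Rightarrow> real) \<Rightarrow> real^('s \<times> 'a)^('s \<times> 'a)" where
  "Dmat d = (\<chi> i j. if i = j then d i else 0)"

definition Pmat :: "('s::finite \<Rightarrow> 'a::finite \<Rightarrow> 's \<Rightarrow> real) \<Rightarrow> real^'s^('s \<times> 'a)" where
  "Pmat P = (\<chi> i s'. case i of (s,a) \<Rightarrow> P s a s')"

definition Pimat :: "(real^('s::finite \<times> 'a::finite) \<Rightarrow> 's \<Rightarrow> 'a) \<Rightarrow> real^('s \<times> 'a) \<Rightarrow> real^('s \<times> 'a)^'s" where
  "Pimat sel Q = (\<chi> s j. if j = (s, sel Q s) then 1 else 0)"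

definition greedy_selector :: "(real^('s::finite \<times> 'a::finite) \<Rightarrow> 's \<Rightarrow> 'a) \<Rightarrow> bool" where
  "greedy_selector sel \<longleftrightarrow> (\<forall>Q s b. Q $ (s,b) \<le> Q $ (s, sel Q s))"

definition is_stochastic :: "('s::finite \<Rightarrow> 'a::finite \<Rightarrow> 's \<Rightarrow> real) \<Rightarrow> bool" where
  "is_stochastic P \<longleftrightarrow> (\<forall>s a s'. 0 \<le> P s a s') \<and> (\<forall>s a. (\<Sum>s'\<in>UNIV. P s a s') = 1)"

definition is_optimal_Q :: "('s::finite \<Rightarrow> 'a::finite \<Rightarrow> 's \<Rightarrow> real) \<Rightarrow> ('s \<Rightarrow> 'a \<Rightarrow> 's \<Rightarrow> real) \<Rightarrow> real \<Rightarrow> real^('s \<times> 'a) \<Rightarrow> bool" where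
  "is_optimal_Q P rw \<gamma> Q \<longleftrightarrow> (\<forall>s a. Q $ (s,a) = expR P rw $ (s,a) + \<gamma> * (\<Sum>s'\<in>UNIV. P s a s' * Max (range (\<lambda>b. Q $ (s',b)))))"

definition sdq_step :: "(real^('s::finite \<times> 'a::finite) \<Rightarrow> 's \<Rightarrow> 'a) \<Rightarrow> ('s \<Rightarrow> 'a \<Rightarrow> 's \<Rightarrow> real) \<Rightarrow> real \<Rightarrow> real
    \<Rightarrow> real^('s \<times> 'a) \<Rightarrow> real^('s \<times> 'a) \<Rightarrow> 's \<times> 'a \<times> 's \<Rightarrow> real^('s \<times> 'a)" where
  "sdq_step sel rw \<gamma> \<alpha> Q1 Q2 smp = (case smp of (s,a,s') \<Rightarrow>
     Q1 + (\<alpha> * (rw s a s' + \<gamma> * Q1 $ (s', sel Q2 s') - Q1 $ (s,a))) *\<^sub>R axis (s,a) 1)"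

fun sdq :: "(real^('s::finite \<times> 'a::finite) \<Rightarrow> 's \<Rightarrow> 'a) \<Rightarrow> ('s \<Rightarrow> 'a \<Rightarrow> 's \<Rightarrow> real) \<Rightarrow> real \<Rightarrow> real
    \<Rightarrow> real^('s \<times> 'a) \<Rightarrow> real^('s \<times> 'a) \<Rightarrow> (nat \<Rightarrow> 's \<times> 'a \<times> 's) \<Rightarrow> nat \<Rightarrow> (real^('s \<times> 'a)) \<times> (real^('s \<times> 'a))" where
  "sdq sel rw \<gamma> \<alpha> QA0 QB0 smp 0 = (QA0, QB0)"
| "sdq sel rw \<gamma> \<alpha> QA0 QB0 smp (Suc k) = (case sdq sel rw \<gamma> \<alpha> QA0 QB0 smp k of (QA, QB) \<Rightarrow>
     (sdq_step sel rw \<gamma> \<alpha> QA QB (smp k), sdq_step sel rw \<gamma> \<alpha> QB QA (smp k)))"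

definition noise :: "('s::finite \<Rightarrow> 'a::finite \<Rightarrow> 's \<Rightarrow> real) \<Rightarrow> ('s \<Rightarrow> 'a \<Rightarrow> 's \<Rightarrow> real) \<Rightarrow> real
    \<Rightarrow> ('s \<times> 'a \<Rightarrow> real) \<Rightarrow> (real^('s \<times> 'a) \<Rightarrow> 's \<Rightarrow> 'a)
    \<Rightarrow> real^('s \<times> 'a) \<Rightarrow> real^('s \<times> 'a) \<Rightarrow> 's \<times> 'a \<times> 's \<Rightarrow> real^('s \<times> 'a)" where
  "noise P rw \<gamma> d sel Q1 Q2 smp = (case smp of (s,a,s') \<Rightarrow>
     let e = axis (s,a) (1::real) in
       rw s a s' *\<^sub>R e + (\<gamma> * ((Pimat sel Q2 *v Q1) $ s')) *\<^sub>R e - (e \<bullet> Q1) *\<^sub>R e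
       - (Dmat d *v expR P rw + \<gamma> *\<^sub>R ((Dmat d ** Pmat P ** Pimat sel Q2) *v Q1) - Dmat d *v Q1))"

fun upper :: "('s::finite \<Rightarrow> 'a::finite \<Rightarrow> 's \<Rightarrow> real) \<Rightarrow> ('s \<Rightarrow> 'a \<Rightarrow> 's \<Rightarrow> real) \<Rightarrow> real
    \<Rightarrow> ('s \<times> 'a \<Rightarrow> real) \<Rightarrow> real \<Rightarrow> (real^('s \<times> 'a) \<Rightarrow> 's \<Rightarrow> 'a) \<Rightarrow> real^('s \<times> 'a)
    \<Rightarrow> real^('s \<times> 'a) \<Rightarrow> real^('s \<times> 'a) \<Rightarrow> real^('s \<times> 'a) \<Rightarrow> real^('s \<times> 'a)
    \<Rightarrow> (nat \<Rightarrow> 's \<times> 'a \<times> 's) \<Rightarrow> nat \<Rightarrow> (real^('s \<times> 'a)) \<times> (real^('s \<times> 'a))" where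
  "upper P rw \<gamma> d \<alpha> sel Qs QA0 QB0 QAU0 QBU0 smp 0 = (QAU0, QBU0)"
| "upper P rw \<gamma> d \<alpha> sel Qs QA0 QB0 QAU0 QBU0 smp (Suc k) =
    (case upper P rw \<gamma> d \<alpha> sel Qs QA0 QB0 QAU0 QBU0 smp k of (QAU, QBU) \<Rightarrow>
     case sdq sel rw \<gamma> \<alpha> QA0 QB0 smp k of (QA, QB) \<Rightarrow>
     (Qs + (mat 1 + (\<alpha> * \<gamma>) *\<^sub>R (Dmat d ** Pmat P ** Pimat sel QB) - \<alpha> *\<^sub>R Dmat d) *v (QAU - Qs)
         + \<alpha> *\<^sub>R noise P rw \<gamma> d sel QA QB (smp k),
      Qs + (mat 1 + (\<alpha> * \<gamma>) *\<^sub>R (Dmat d ** Pmat P ** Pimat sel QA) - \<alpha> *\<^sub>R Dmat d) *v (QBU - Qs)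
         + \<alpha> *\<^sub>R noise P rw \<gamma> d sel QB QA (smp k)))"

end

(* Subtracting the SDQ recursion from the comparison recursion, the sampling noise cancels
   exactly, and the Bellman equation Qs = R + gamma P max Qs turns what remains into
     Q_{k+1}^{A_U} - Q_{k+1}^A = (I - alpha D + alpha gamma D P Pi_{Q_k^B}) (Q_k^{A_U} - Q_k^A)
                                 + alpha gamma D P (max Qs - Pi_{Q_k^B} Qs).
   The matrix has nonnegative entries because alpha d <= 1, and Pi_Q Qs <= max Qs for every
   selector, so the gap stays nonnegative by induction on k, jointly for A and B. *)

theory Submission
  imports Defs
begin

definition greedy_value :: "real^('s::finite \<times> 'a::finite) \<Rightarrow> real^'s" where
  "greedy_value Q = (\<chi> s. Max (range (\<lambda>b. Q $ (s,b))))"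

abbreviation comparison_matrix ::
    "('s::finite \<Rightarrow> 'a::finite \<Rightarrow> 's \<Rightarrow> real) \<Rightarrow> ('s \<times> 'a \<Rightarrow> real) \<Rightarrow> real \<Rightarrow> real
     \<Rightarrow> (real^('s \<times> 'a) \<Rightarrow> 's \<Rightarrow> 'a) \<Rightarrow> real^('s \<times> 'a) \<Rightarrow> real^('s \<times> 'a)^('s \<times> 'a)" where
  "comparison_matrix P d \<alpha> \<gamma> sel Q \<equiv>
     mat 1 + (\<alpha> * \<gamma>) *\<^sub>R (Dmat d ** Pmat P ** Pimat sel Q) - \<alpha> *\<^sub>R Dmat d"

lemma Dmat_mult_vec_nth: "(Dmat d *v x) $ i = d i * x $ i"
  by (simp add: Dmat_def matrix_vector_mult_def if_distrib[of "\<lambda>c. c * z" for z] cong: if_cong)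

lemma Pmat_mult_vec_nth: "(Pmat P *v y) $ (s,a) = (\<Sum>s'\<in>UNIV. P s a s' * y $ s')"
  by (simp add: Pmat_def matrix_vector_mult_def)

lemma Pimat_mult_vec_nth: "(Pimat sel Q *v x) $ s = x $ (s, sel Q s)"
  by (simp add: Pimat_def matrix_vector_mult_def if_distrib[of "\<lambda>c. c * z" for z] cong: if_cong)

lemma Pimat_mult_vec_le_greedy_value: "Pimat sel Q' *v Q \<le> greedy_value Q"
  by (auto simp: less_eq_vec_def Pimat_mult_vec_nth greedy_value_def)

lemma comparison_matrix_mult_vec:
  "comparison_matrix P d \<alpha> \<gamma> sel Q *v x
     = x + (\<alpha> * \<gamma>) *\<^sub>R (Dmat d *v (Pmat P *v (Pimat sel Q *v x))) - \<alpha> *\<^sub>R (Dmat d *v x)"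
  by (simp add: matrix_vector_mult_add_rdistrib matrix_vector_mult_diff_rdistrib
      flip: scaleR_matrix_vector_assoc matrix_vector_mul_assoc)

lemma comparison_matrix_mult_vec_nth:
  "(comparison_matrix P d \<alpha> \<gamma> sel Q *v x) $ (s,a)
     = (1 - \<alpha> * d (s,a)) * x $ (s,a) + \<alpha> * \<gamma> * d (s,a) * (\<Sum>s'\<in>UNIV. P s a s' * x $ (s', sel Q s'))"
  unfolding comparison_matrix_mult_vec
  by (simp add: Dmat_mult_vec_nth Pmat_mult_vec_nth Pimat_mult_vec_nth algebra_simps)

lemma comparison_matrix_mono:
  fixes P :: "'s::finite \<Rightarrow> 'a::finite \<Rightarrow> 's \<Rightarrow> real"
  assumes P_nonneg: "\<forall>s a s'. 0 \<le> P s a s'" and d_nonneg: "\<forall>i. 0 \<le> d i"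
    and step_le_one: "\<forall>i. \<alpha> * d i \<le> 1" and "0 \<le> \<alpha>" "0 \<le> \<gamma>" and "x \<le> y"
  shows "comparison_matrix P d \<alpha> \<gamma> sel Q *v x \<le> comparison_matrix P d \<alpha> \<gamma> sel Q *v y"
  unfolding less_eq_vec_def
proof (intro allI)
  fix i :: "'s \<times> 'a"
  obtain s a where i: "i = (s,a)" by (cases i)
  have "(\<Sum>s'\<in>UNIV. P s a s' * x $ (s', sel Q s')) \<le> (\<Sum>s'\<in>UNIV. P s a s' * y $ (s', sel Q s'))"
    using \<open>x \<le> y\<close> P_nonneg by (intro sum_mono mult_left_mono) (auto simp: less_eq_vec_def)
  moreover have "0 \<le> 1 - \<alpha> * d (s,a)" and "0 \<le> \<alpha> * \<gamma> * d (s,a)"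
    using step_le_one d_nonneg \<open>0 \<le> \<alpha>\<close> \<open>0 \<le> \<gamma>\<close> by auto
  ultimately show "(comparison_matrix P d \<alpha> \<gamma> sel Q *v x) $ i \<le> (comparison_matrix P d \<alpha> \<gamma> sel Q *v y) $ i"
    using \<open>x \<le> y\<close> unfolding i comparison_matrix_mult_vec_nth less_eq_vec_def
    by (intro add_mono mult_left_mono) simp_all
qed

lemma sdq_step_eq_mean_plus_noise:
  "sdq_step sel rw \<gamma> \<alpha> Q1 Q2 smp
     = Q1 + \<alpha> *\<^sub>R (Dmat d *v expR P rw + \<gamma> *\<^sub>R ((Dmat d ** Pmat P ** Pimat sel Q2) *v Q1) - Dmat d *v Q1)
          + \<alpha> *\<^sub>R noise P rw \<gamma> d sel Q1 Q2 smp"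
  by (cases smp) (simp add: sdq_step_def noise_def Let_def Pimat_mult_vec_nth inner_axis' algebra_simps)

lemma optimal_Q_bellman:
  fixes Qs :: "real^('s::finite \<times> 'a::finite)"
  assumes "is_optimal_Q P rw \<gamma> Qs"
  shows "Qs = expR P rw + \<gamma> *\<^sub>R (Pmat P *v greedy_value Qs)"
proof (rule vec_eq_iff[THEN iffD2, rule_format])
  fix i :: "'s \<times> 'a"
  obtain s a where i: "i = (s,a)" by (cases i)
  have bellman: "Qs $ (s,a)
      = expR P rw $ (s,a) + \<gamma> * (\<Sum>s'\<in>UNIV. P s a s' * Max (range (\<lambda>b. Qs $ (s',b))))"
    using assms unfolding is_optimal_Q_def by blast
  have rhs: "(expR P rw + \<gamma> *\<^sub>R (Pmat P *v greedy_value Qs)) $ (s,a)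
      = expR P rw $ (s,a) + \<gamma> * (\<Sum>s'\<in>UNIV. P s a s' * Max (range (\<lambda>b. Qs $ (s',b))))"
    by (simp add: Pmat_mult_vec_nth greedy_value_def)
  show "Qs $ i = (expR P rw + \<gamma> *\<^sub>R (Pmat P *v greedy_value Qs)) $ i"
    unfolding i rhs by (fact bellman)
qed

lemma comparison_step_minus_sdq_step:
  assumes "is_optimal_Q P rw \<gamma> Qs"
  shows "Qs + comparison_matrix P d \<alpha> \<gamma> sel Q2 *v (Q1 - Qs) + \<alpha> *\<^sub>R noise P rw \<gamma> d sel Q1 Q2 smp
           - sdq_step sel rw \<gamma> \<alpha> Q1 Q2 smp
         = (\<alpha> * \<gamma>) *\<^sub>R (Dmat d *v (Pmat P *v (greedy_value Qs - Pimat sel Q2 *v Qs)))"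
proof -
  have "Dmat d *v Qs = Dmat d *v expR P rw + \<gamma> *\<^sub>R (Dmat d *v (Pmat P *v greedy_value Qs))"
    by (subst optimal_Q_bellman[OF assms]) (simp add: matrix_vector_right_distrib matrix_vector_mult_scaleR)
  then show ?thesis
    unfolding comparison_matrix_mult_vec sdq_step_eq_mean_plus_noise[where P = P and d = d]
    by (simp add: matrix_vector_mul_assoc matrix_mul_assoc algebra_simps)
qed

lemma Dmat_Pmat_mult_vec_nonneg:
  fixes P :: "'s::finite \<Rightarrow> 'a::finite \<Rightarrow> 's \<Rightarrow> real"
  assumes "\<forall>s a s'. 0 \<le> P s a s'" and "\<forall>i. 0 \<le> d i" and "0 \<le> v"
  shows "0 \<le> Dmat d *v (Pmat P *v v)"
  using assms unfolding less_eq_vec_def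
  by (auto simp: Dmat_mult_vec_nth Pmat_mult_vec_nth intro!: mult_nonneg_nonneg sum_nonneg)

lemma sdq_step_le_comparison_step:
  fixes P :: "'s::finite \<Rightarrow> 'a::finite \<Rightarrow> 's \<Rightarrow> real"
  assumes P_nonneg: "\<forall>s a s'. 0 \<le> P s a s'" and d_nonneg: "\<forall>i. 0 \<le> d i"
    and step_le_one: "\<forall>i. \<alpha> * d i \<le> 1" and "0 \<le> \<alpha>" "0 \<le> \<gamma>"
    and opt: "is_optimal_Q P rw \<gamma> Qs" and "Q1 \<le> Q1U"
  shows "sdq_step sel rw \<gamma> \<alpha> Q1 Q2 smp
           \<le> Qs + comparison_matrix P d \<alpha> \<gamma> sel Q2 *v (Q1U - Qs) + \<alpha> *\<^sub>R noise P rw \<gamma> d sel Q1 Q2 smp"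
proof -
  have "0 \<le> (\<alpha> * \<gamma>) *\<^sub>R (Dmat d *v (Pmat P *v (greedy_value Qs - Pimat sel Q2 *v Qs)))"
    using \<open>0 \<le> \<alpha>\<close> \<open>0 \<le> \<gamma>\<close>
    by (intro scaleR_nonneg_nonneg mult_nonneg_nonneg Dmat_Pmat_mult_vec_nonneg[OF P_nonneg d_nonneg])
      (simp_all add: Pimat_mult_vec_le_greedy_value)
  then have "sdq_step sel rw \<gamma> \<alpha> Q1 Q2 smp
      \<le> Qs + comparison_matrix P d \<alpha> \<gamma> sel Q2 *v (Q1 - Qs) + \<alpha> *\<^sub>R noise P rw \<gamma> d sel Q1 Q2 smp"
    using comparison_step_minus_sdq_step[OF opt] by (metis diff_ge_0_iff_ge)
  also have "\<dots> \<le> Qs + comparison_matrix P d \<alpha> \<gamma> sel Q2 *v (Q1U - Qs) + \<alpha> *\<^sub>R noise P rw \<gamma> d sel Q1 Q2 smp"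
    using comparison_matrix_mono[OF P_nonneg d_nonneg step_le_one \<open>0 \<le> \<alpha>\<close> \<open>0 \<le> \<gamma>\<close>] \<open>Q1 \<le> Q1U\<close>
    by simp
  finally show ?thesis .
qed

lemma sdq_le_upper:
  fixes P :: "'s::finite \<Rightarrow> 'a::finite \<Rightarrow> 's \<Rightarrow> real"
  assumes P_nonneg: "\<forall>s a s'. 0 \<le> P s a s'" and d_nonneg: "\<forall>i. 0 \<le> d i"
    and step_le_one: "\<forall>i. \<alpha> * d i \<le> 1" and "0 \<le> \<alpha>" "0 \<le> \<gamma>"
    and opt: "is_optimal_Q P rw \<gamma> Qs" and "QA0 \<le> QAU0" "QB0 \<le> QBU0"
  shows "fst (sdq sel rw \<gamma> \<alpha> QA0 QB0 smp k) \<le> fst (upper P rw \<gamma> d \<alpha> sel Qs QA0 QB0 QAU0 QBU0 smp k)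
       \<and> snd (sdq sel rw \<gamma> \<alpha> QA0 QB0 smp k) \<le> snd (upper P rw \<gamma> d \<alpha> sel Qs QA0 QB0 QAU0 QBU0 smp k)"
proof (induction k)
  case 0
  then show ?case using \<open>QA0 \<le> QAU0\<close> \<open>QB0 \<le> QBU0\<close> by simp
next
  case (Suc k)
  obtain QA QB where sdq_k: "sdq sel rw \<gamma> \<alpha> QA0 QB0 smp k = (QA, QB)"
    by fastforce
  obtain QAU QBU where upper_k: "upper P rw \<gamma> d \<alpha> sel Qs QA0 QB0 QAU0 QBU0 smp k = (QAU, QBU)"
    by fastforce
  have "QA \<le> QAU" and "QB \<le> QBU"
    using Suc.IH by (simp_all add: sdq_k upper_k)
  then show ?case
    by (simp add: sdq_k upper_k
        sdq_step_le_comparison_step[OF P_nonneg d_nonneg step_le_one \<open>0 \<le> \<alpha>\<close> \<open>0 \<le> \<gamma>\<close> opt])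
qed

theorem proposition1:
  fixes P :: "'s::finite \<Rightarrow> 'a::finite \<Rightarrow> 's \<Rightarrow> real"
    and rw :: "'s \<Rightarrow> 'a \<Rightarrow> 's \<Rightarrow> real"
    and d :: "'s \<times> 'a \<Rightarrow> real"
    and \<gamma> \<alpha> :: real
    and sel :: "real^('s \<times> 'a) \<Rightarrow> 's \<Rightarrow> 'a"
    and Qs QA0 QB0 QAU0 QBU0 :: "real^('s \<times> 'a)"
    and smp :: "nat \<Rightarrow> 's \<times> 'a \<times> 's"
  assumes "is_stochastic P"
    and "0 < \<gamma>" and "\<gamma> < 1"
    and "\<forall>i. 0 < d i" and "(\<Sum>i\<in>UNIV. d i) = 1"
    and "0 < \<alpha>" and "\<alpha> < 1"
    and "greedy_selector sel"
    and "is_optimal_Q P rw \<gamma> Qs"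
    and "\<forall>i. (QAU0 - Qs) $ i \<ge> (QA0 - Qs) $ i"
    and "\<forall>i. (QBU0 - Qs) $ i \<ge> (QB0 - Qs) $ i"
  shows "\<forall>k i.
      (fst (upper P rw \<gamma> d \<alpha> sel Qs QA0 QB0 QAU0 QBU0 smp k) - Qs) $ i
        \<ge> (fst (sdq sel rw \<gamma> \<alpha> QA0 QB0 smp k) - Qs) $ i
    \<and> (snd (upper P rw \<gamma> d \<alpha> sel Qs QA0 QB0 QAU0 QBU0 smp k) - Qs) $ i
        \<ge> (snd (sdq sel rw \<gamma> \<alpha> QA0 QB0 smp k) - Qs) $ i"
proof -
  have P_nonneg: "\<forall>s a s'. 0 \<le> P s a s'"
    using \<open>is_stochastic P\<close> by (simp add: is_stochastic_def)
  have d_nonneg: "\<forall>i. 0 \<le> d i"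
    using \<open>\<forall>i. 0 < d i\<close> by (simp add: less_imp_le)
  have step_le_one: "\<forall>i. \<alpha> * d i \<le> 1"
  proof
    fix i
    have "d i \<le> 1"
      using member_le_sum[of i UNIV d] d_nonneg \<open>(\<Sum>i\<in>UNIV. d i) = 1\<close> by simp
    then show "\<alpha> * d i \<le> 1"
      using \<open>\<alpha> < 1\<close> d_nonneg[rule_format, of i] by (intro mult_le_one) auto
  qed
  have "QA0 \<le> QAU0" and "QB0 \<le> QBU0"
    using assms(10,11) by (simp_all add: less_eq_vec_def)
  then show ?thesis
    using sdq_le_upper[OF P_nonneg d_nonneg step_le_one _ _ \<open>is_optimal_Q P rw \<gamma> Qs\<close>]
      \<open>0 < \<alpha>\<close> \<open>0 < \<gamma>\<close>
    by (simp add: less_eq_vec_def)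
qed

end
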